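(* Let $p$ be an odd prime and $b,c\in\mathbb Z$. For every integer $k$ with $-p\le k\le p$, $$(k+1)\binom{p-1}{k-1}_{b,c}-(k-1)c\binom{p-1}{k+1}_{b,c}\equiv \binom{p}{k}_{b,c}-(b^2-4c)\binom{p-2}{k}_{b,c}\pmod p.$$
   Context: For $n\in\mathbb N$ and $b,c\in\mathbb Z$, the generalized trinomial coefficients $\binom{n}{k}_{b,c}$ ($k\in\mathbb Z$) are the integers defined by $\left(x+b+\frac{c}{x}\right)^n=\sum_{k\in\mathbb Z}\binom{n}{k}_{b,c}x^k$; they vanish for $|k|>n$. *)

theory Defs
  imports "HOL-Computational_Algebra.Formal_Laurent_Series" "HOL-Number_Theory.Cong"
begin

definition gtrinom :: "nat \<Rightarrow> int \<Rightarrow> int \<Rightarrow> int \<Rightarrow> int" where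
  "gtrinom n k b c = fls_nth ((fls_X + fls_const b + fls_const c * fls_X_inv) ^ n) k"

end

theory Submission
  imports Defs
begin

text \<open>Write \<open>f = x + b + c/x\<close> and \<open>T n k\<close> for the coefficient of \<open>x^k\<close> in \<open>f^n\<close>.
  Comparing coefficients in \<open>f \<cdot> x(f^m)' = m (x - c/x) f^m\<close> gives a three-term relation for
  the \<open>T m\<close>, and combining three instances of it shows that for every \<open>n \<ge> 2\<close> the two sides of
  the congruence differ by \<open>n\<close> times the coefficient of \<open>x^k\<close> in \<open>f^(n-2) (x - c/x)^2\<close>.
  So the congruence holds modulo any \<open>n \<ge> 2\<close>, not only modulo odd primes.\<close>

lemma gtrinom_0: "gtrinom 0 k b c = (if k = 0 then 1 else 0)"
  by (simp add: gtrinom_def)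

lemma gtrinom_Suc:
  "gtrinom (Suc n) k b c = gtrinom n (k - 1) b c + b * gtrinom n k b c + c * gtrinom n (k + 1) b c"
proof -
  let ?g = "(fls_X + fls_const b + fls_const c * fls_X_inv) ^ n :: int fls"
  have "(fls_X + fls_const b + fls_const c * fls_X_inv) ^ Suc n
        = fls_X * ?g + fls_const b * ?g + fls_const c * (fls_X_inv * ?g)"
    by (simp add: algebra_simps)
  then show ?thesis
    by (simp add: gtrinom_def fls_X_times_conv_shift fls_X_inv_times_conv_shift)
qed

lemma gtrinom_three_term_relation:
  fixes m :: nat and b c :: int
  defines "R \<equiv> \<lambda>m k. (k - 1 - int m) * gtrinom m (k - 1) b c + b * k * gtrinom m k b c
                     + c * (k + 1 + int m) * gtrinom m (k + 1) b c"
  shows "R m k = 0"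
proof (induction m arbitrary: k)
  case 0
  show ?case by (simp add: R_def gtrinom_0)
next
  case (Suc m)
  have "R (Suc m) k = R m (k - 1) + b * R m k + c * R m (k + 1)"
    by (simp add: R_def gtrinom_Suc algebra_simps)
  with Suc.IH show ?case by simp
qed

lemma gtrinom_difference_eq:
  fixes m :: nat and b c k :: int
  defines "T \<equiv> \<lambda>n j. gtrinom n j b c"
  shows "(k + 1) * T (m + 1) (k - 1) - (k - 1) * c * T (m + 1) (k + 1)
           - (T (m + 2) k - (b^2 - 4 * c) * T m k)
         = int (m + 2) * (T (m + 2) k - 2 * b * T (m + 1) k + (b^2 - 4 * c) * T m k)"
proof -
  have rel: "\<And>j. (j - 1 - int m) * T m (j - 1) + b * j * T m j + c * (j + 1 + int m) * T m (j + 1) = 0"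
    unfolding T_def by (rule gtrinom_three_term_relation)
  have step1: "\<And>j. T (m + 1) j = T m (j - 1) + b * T m j + c * T m (j + 1)"
    and step2: "\<And>j. T (m + 2) j = T (m + 1) (j - 1) + b * T (m + 1) j + c * T (m + 1) (j + 1)"
    unfolding T_def by (simp_all add: gtrinom_Suc)
  have "(k + 1) * T (m + 1) (k - 1) - (k - 1) * c * T (m + 1) (k + 1)
          - (T (m + 2) k - (b^2 - 4 * c) * T m k)
          - int (m + 2) * (T (m + 2) k - 2 * b * T (m + 1) k + (b^2 - 4 * c) * T m k)
        = ((k - 2 - int m) * T m (k - 2) + b * (k - 1) * T m (k - 1) + c * (k + int m) * T m k)
          - c * ((k - int m) * T m k + b * (k + 1) * T m (k + 1) + c * (k + 2 + int m) * T m (k + 2))"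
    unfolding step2 step1 by (simp add: algebra_simps power2_eq_square)
  also have "\<dots> = 0"
    using rel[of "k - 1"] rel[of "k + 1"] by (simp add: algebra_simps)
  finally show ?thesis by simp
qed

lemma gtrinom_cong:
  fixes n :: nat and b c k :: int
  assumes "n \<ge> 2"
  shows "[(k + 1) * gtrinom (n - 1) (k - 1) b c - (k - 1) * c * gtrinom (n - 1) (k + 1) b c
          = gtrinom n k b c - (b^2 - 4 * c) * gtrinom (n - 2) k b c] (mod int n)"
proof -
  obtain m where "n = m + 2" using assms by (metis add.commute le_add_diff_inverse)
  then show ?thesis
    unfolding cong_iff_dvd_diff using gtrinom_difference_eq[of k m b c] by simp
qed

theorem mainTheorem8:
  fixes p :: nat and b c k :: int
  assumes "prime p" and "odd p" and "- int p \<le> k" and "k \<le> int p"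
  shows "[(k + 1) * gtrinom (p - 1) (k - 1) b c - (k - 1) * c * gtrinom (p - 1) (k + 1) b c
          = gtrinom p k b c - (b^2 - 4 * c) * gtrinom (p - 2) k b c] (mod int p)"
  using gtrinom_cong prime_ge_2_nat[OF \<open>prime p\<close>] by blast

end
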